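(* Let $\beta>0$ and let $V\in\mathbb R^{d\times d}$ be symmetric and negative definite. Let $(x_1(t),x_2(t))\in\mathbb S^{d-1}\times\mathbb S^{d-1}$ solve the two-particle system \[ \dot x_i=P^\perp_{x_i}\Big(\frac1{Z_i}\sum_{j=1}^2 e^{\beta\langle x_i,Vx_j\rangle}Vx_j\Big),\qquad Z_i=\sum_{k=1}^2 e^{\beta\langle x_i,Vx_k\rangle},\quad i=1,2. \] Then $\rho(t):=\langle x_1(t),x_2(t)\rangle$ satisfies $\dot\rho(t)<0$ whenever $\rho(t)\in(-1,1)$; in particular $\rho$ is strictly decreasing on any time interval on which $\rho(t)\in(-1,1)$.
   Context: $P^\perp_xy=y-\langle x,y\rangle x$ denotes the orthogonal projection onto $T_x\mathbb S^{d-1}$. *)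

theory Defs
  imports "HOL-Analysis.Analysis"
begin

definition tproj :: "real^'n \<Rightarrow> real^'n \<Rightarrow> real^'n" where
  "tproj x y = y - (x \<bullet> y) *\<^sub>R x"

definition two_particle_field ::
  "real \<Rightarrow> real^'n^'n \<Rightarrow> (nat \<Rightarrow> real^'n) \<Rightarrow> nat \<Rightarrow> real^'n" where
  "two_particle_field \<beta> V xs i =
     (let Z = (\<Sum>k\<in>{1,2::nat}. exp (\<beta> * (xs i \<bullet> (V *v xs k))))
      in tproj (xs i)
           ((1 / Z) *\<^sub>R (\<Sum>j\<in>{1,2::nat}. exp (\<beta> * (xs i \<bullet> (V *v xs j))) *\<^sub>R (V *v xs j))))"

end

theory Submission
  imports Defs
begin

text \<open>Write \<open>a = \<langle>x\<^sub>1,Vx\<^sub>1\<rangle>\<close>, \<open>b = \<langle>x\<^sub>1,Vx\<^sub>2\<rangle>\<close>, \<open>c = \<langle>x\<^sub>2,Vx\<^sub>2\<rangle>\<close>, \<open>r = \<rho>\<close>,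
  and let \<open>p = \<sigma>(\<beta>(a - b))\<close>, \<open>q = \<sigma>(\<beta>(c - b))\<close> be the self-weights of the two particles
  (\<open>\<sigma>\<close> the logistic function). A direct computation gives
  \<open>\<rho>' = (1 + r)/2 \<cdot> (a + c - 2b)(1 - p - q) + (1 - r)/2 \<cdot> (a + c + 2b + (p - q)(a - c))\<close>.
  Negative definiteness gives \<open>a, c < 0\<close>, \<open>b\<^sup>2 \<le> ac\<close> and
  \<open>a + c - 2b = \<langle>x\<^sub>1 - x\<^sub>2, V(x\<^sub>1 - x\<^sub>2)\<rangle> < 0\<close>; the latter also forces \<open>p + q < 1\<close>,
  so the first term is strictly negative. For the second term assume \<open>c \<le> a\<close>: if \<open>b \<le> 0\<close> it
  is at most \<open>2(a + b)\<close>, and if \<open>b > 0\<close> the estimate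
  \<open>(\<sigma>(-x) - \<sigma>(-y))(x + y) \<le> y - x\<close> for \<open>0 \<le> x \<le> y\<close>, applied to \<open>x = \<beta>(b - a)\<close>,
  \<open>y = \<beta>(b - c)\<close>, together with \<open>b\<^sup>2 \<le> ac\<close> shows it is nonpositive.\<close>

definition logistic :: "real \<Rightarrow> real" where
  "logistic u = 1 / (1 + exp (- u))"

lemma logistic_pos: "0 < logistic u"
  by (simp add: logistic_def add_pos_pos)

lemma logistic_neg: "logistic (- u) = 1 - logistic u"
proof -
  have "1 + exp u > 0" "1 + exp (- u) > 0" by (auto intro: add_pos_pos)
  then show ?thesis by (simp add: logistic_def field_simps exp_minus)
qed

lemma logistic_less_one: "logistic u < 1"
  using logistic_pos[of "- u"] by (simp add: logistic_neg)

lemma logistic_strict_mono: "u < v \<Longrightarrow> logistic u < logistic v"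
  by (simp add: logistic_def frac_less2 add_pos_pos)

lemma exp_div_exp_add_exp: "exp u / (exp u + exp v) = logistic (u - v)"
proof -
  have "exp u / (exp u + exp v) = 1 / (1 + exp v / exp u)"
    by (simp add: field_simps add_pos_pos)
  then show ?thesis by (simp add: logistic_def exp_diff flip: exp_minus)
qed

lemma two_mult_le_exp: "2 * x \<le> exp (x :: real)"
proof (cases "x \<le> 0")
  case True
  then show ?thesis using exp_gt_zero[of x] by linarith
next
  case False
  have "2 * x \<le> 1 + x + x\<^sup>2 / 2"
    using zero_le_power2[of "x - 1"] by (simp add: power2_eq_square algebra_simps)
  also have "\<dots> \<le> exp x"
    using False by (intro exp_lower_Taylor_quadratic) simp
  finally show ?thesis .
qed

lemma exp_diff_le: "exp y - exp x \<le> (y - x) * exp (y :: real)"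
proof -
  have "exp y * (1 + (x - y)) \<le> exp y * exp (x - y)"
    by (intro mult_left_mono exp_ge_add_one_self) simp
  then show ?thesis by (simp add: algebra_simps flip: exp_add)
qed

lemma logistic_diff_mult_add_le:
  assumes "0 \<le> x" "x \<le> y"
  shows "(logistic (- x) - logistic (- y)) * (x + y) \<le> y - x"
proof -
  define w where "w = logistic (- x)"
  define \<delta> where "\<delta> = w - logistic (- y)"
  have pos: "0 < 1 + exp x" "0 < 1 + exp y"
    by (simp_all add: add_pos_pos)
  have w: "w * (1 + exp x) = 1" "0 < w"
    using pos by (simp_all add: w_def logistic_def)
  have \<delta>_le_w: "\<delta> \<le> w"
    using logistic_pos[of "- y"] by (simp add: \<delta>_def)
  have \<delta>_le_dw: "\<delta> \<le> (y - x) * w"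
  proof -
    have "\<delta> = w * ((exp y - exp x) / (1 + exp y))"
      using pos by (simp add: \<delta>_def w_def logistic_def field_simps)
    also have "\<dots> \<le> w * ((y - x) * exp y / (1 + exp y))"
      using w(2) exp_diff_le[of y x] by (intro mult_left_mono divide_right_mono) (use pos in auto)
    also have "\<dots> \<le> w * (y - x)"
      using w(2) assms by (intro mult_left_mono) (use pos in \<open>auto simp: divide_le_eq intro: mult_left_mono\<close>)
    finally show ?thesis by (simp add: mult.commute)
  qed
  have x_le: "2 * x \<le> exp x" by (rule two_mult_le_exp)
  have "x + y \<ge> 0" using assms by simp
  show ?thesis
  proof (cases "y - x \<ge> 1")
    case True
    have "\<delta> * (x + y) \<le> w * (2 * x + (y - x))"
      using \<delta>_le_w \<open>x + y \<ge> 0\<close> by (simp add: mult_right_mono)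
    also have "\<dots> \<le> w * ((y - x) * (1 + exp x))"
    proof (intro mult_left_mono)
      have "exp x \<le> (y - x) * exp x" using True by simp
      then show "2 * x + (y - x) \<le> (y - x) * (1 + exp x)"
        using x_le by (simp add: algebra_simps)
    qed (use w in simp)
    also have "\<dots> = y - x" using w(1) by (metis mult.left_commute mult_1_right)
    finally show ?thesis by (simp add: \<delta>_def w_def)
  next
    case False
    have "\<delta> * (x + y) \<le> (y - x) * w * (2 * x + (y - x))"
      using \<delta>_le_dw \<open>x + y \<ge> 0\<close> by (simp add: mult_right_mono)
    also have "\<dots> \<le> (y - x) * w * (1 + exp x)"
      using False x_le w(2) assms by (intro mult_left_mono) auto
    also have "\<dots> = y - x" using w(1) by (metis mult.assoc mult_1_right)
    finally show ?thesis by (simp add: \<delta>_def w_def)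
  qed
qed

lemma softmax_cross_term_nonpos:
  fixes a b c \<beta> :: real
  assumes "a < 0" "c \<le> a" "b\<^sup>2 \<le> a * c" "\<beta> > 0"
  shows "a + c + 2 * b + (logistic (\<beta> * (a - b)) - logistic (\<beta> * (c - b))) * (a - c) \<le> 0"
proof -
  define \<delta> where "\<delta> = logistic (\<beta> * (a - b)) - logistic (\<beta> * (c - b))"
  show ?thesis
  proof (cases "b \<le> 0")
    case True
    have "\<delta> \<le> 1"
      using logistic_less_one[of "\<beta> * (a - b)"] logistic_pos[of "\<beta> * (c - b)"] by (simp add: \<delta>_def)
    then have "\<delta> * (a - c) \<le> a - c"
      using mult_right_mono[of \<delta> 1 "a - c"] assms(2) by simp
    then show ?thesis using True assms(1) by (simp add: \<delta>_def)
  next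
    case False
    define S where "S = 2 * b - a - c"
    have S_pos: "S > 0" using False assms(1,2) by (simp add: S_def)
    have "\<delta> * (\<beta> * (b - a) + \<beta> * (b - c)) \<le> \<beta> * (b - c) - \<beta> * (b - a)"
      using logistic_diff_mult_add_le[of "\<beta> * (b - a)" "\<beta> * (b - c)"] False assms
      by (simp add: \<delta>_def algebra_simps)
    then have "\<beta> * (\<delta> * S) \<le> \<beta> * (a - c)" by (simp add: S_def algebra_simps)
    then have "\<delta> * S \<le> a - c" using assms(4) by simp
    then have "\<delta> * (a - c) * S \<le> (a - c) * (a - c)"
      using mult_left_mono[of "\<delta> * S" "a - c" "a - c"] assms(2) by (simp add: mult_ac)
    also have "\<dots> \<le> - (a + c + 2 * b) * S"
      using assms(3) by (simp add: S_def power2_eq_square algebra_simps)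
    finally have "\<delta> * (a - c) \<le> - (a + c + 2 * b)" using S_pos by simp
    then show ?thesis by (simp add: \<delta>_def)
  qed
qed

lemma softmax_derivative_neg:
  fixes a b c r \<beta> :: real
  assumes "a < 0" "c < 0" "a + c < 2 * b" "b\<^sup>2 \<le> a * c" "-1 < r" "r < 1" "\<beta> > 0"
  defines "p \<equiv> logistic (\<beta> * (a - b))" and "q \<equiv> logistic (\<beta> * (c - b))"
  shows "p * (b - a * r) + (1 - p) * (c - b * r) + (1 - q) * (a - b * r) + q * (b - c * r) < 0"
proof -
  have "- (\<beta> * (a - b)) = \<beta> * (b - a)" by (simp add: algebra_simps)
  then have "logistic (\<beta> * (b - a)) = 1 - p"
    using logistic_neg[of "\<beta> * (a - b)"] by (simp add: p_def)
  moreover have "q < logistic (\<beta> * (b - a))"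
    unfolding q_def using mult_strict_left_mono[OF assms(3,7)]
    by (intro logistic_strict_mono) (simp add: algebra_simps)
  ultimately have "p + q < 1" by simp
  then have attracting: "(a + c - 2 * b) * (1 - p - q) < 0"
    using assms(3) by (simp add: mult_neg_pos)
  have cross: "a + c + 2 * b + (p - q) * (a - c) \<le> 0"
  proof (cases "c \<le> a")
    case True
    then show ?thesis using softmax_cross_term_nonpos assms by (simp add: p_def q_def)
  next
    case False
    then have "c + a + 2 * b + (q - p) * (c - a) \<le> 0"
      using softmax_cross_term_nonpos[of c a b \<beta>] assms by (simp add: p_def q_def mult.commute)
    then show ?thesis by (simp add: algebra_simps)
  qed
  have "p * (b - a * r) + (1 - p) * (c - b * r) + (1 - q) * (a - b * r) + q * (b - c * r)
      = (1 + r) / 2 * ((a + c - 2 * b) * (1 - p - q))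
        + (1 - r) / 2 * (a + c + 2 * b + (p - q) * (a - c))"
    by (simp add: field_simps)
  also have "\<dots> < 0"
  proof (rule add_neg_nonpos)
    show "(1 + r) / 2 * ((a + c - 2 * b) * (1 - p - q)) < 0"
      using mult_pos_neg[OF _ attracting, of "(1 + r) / 2"] assms(5) by simp
    show "(1 - r) / 2 * (a + c + 2 * b + (p - q) * (a - c)) \<le> 0"
      using mult_nonneg_nonpos[OF _ cross, of "(1 - r) / 2"] assms(6) by simp
  qed
  finally show ?thesis .
qed

lemma symmetric_matrix_inner_commute:
  fixes V :: "real^'n^'n"
  assumes "transpose V = V"
  shows "u \<bullet> (V *v w) = w \<bullet> (V *v u)"
  by (metis assms dot_lmul_matrix inner_commute vector_transpose_matrix)

lemma negdef_cauchy_schwarz: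
  fixes V :: "real^'n^'n"
  assumes sym: "transpose V = V" and negdef: "\<forall>v. v \<noteq> 0 \<longrightarrow> v \<bullet> (V *v v) < 0"
  shows "(x \<bullet> (V *v y))\<^sup>2 \<le> (x \<bullet> (V *v x)) * (y \<bullet> (V *v y))"
proof (cases "x = 0")
  case False
  define a b c where "a = x \<bullet> (V *v x)" and "b = x \<bullet> (V *v y)" and "c = y \<bullet> (V *v y)"
  have "a < 0" using False negdef by (simp add: a_def)
  define v where "v = b *\<^sub>R x - a *\<^sub>R y"
  have "v \<bullet> (V *v v) \<le> 0"
    using negdef by (cases "v = 0") (auto intro: less_imp_le)
  moreover have "v \<bullet> (V *v v) = a * (a * c - b\<^sup>2)"
    using symmetric_matrix_inner_commute[OF sym, of y x]
    by (simp add: v_def a_def b_def c_def matrix_vector_mult_diff_distrib inner_diff_left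
        inner_diff_right power2_eq_square algebra_simps)
  ultimately have "0 \<le> a * c - b\<^sup>2"
    using \<open>a < 0\<close> by (simp add: mult_le_0_iff)
  then show ?thesis by (simp add: a_def b_def c_def)
qed simp

lemma inner_tproj_left: "tproj x y \<bullet> z = y \<bullet> z - (x \<bullet> y) * (x \<bullet> z)"
  by (simp add: tproj_def inner_diff_left)

lemma inner_tproj_right: "z \<bullet> tproj x y = z \<bullet> y - (x \<bullet> y) * (z \<bullet> x)"
  by (simp add: tproj_def inner_diff_right)

lemma two_particle_field_eq_tproj:
  fixes \<beta> :: real and V :: "real^'n^'n" and xs :: "nat \<Rightarrow> real^'n" and i :: nat
  defines "w \<equiv> logistic (\<beta> * (xs i \<bullet> (V *v xs 1) - xs i \<bullet> (V *v xs 2)))"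
  shows "two_particle_field \<beta> V xs i = tproj (xs i) (w *\<^sub>R (V *v xs 1) + (1 - w) *\<^sub>R (V *v xs 2))"
proof -
  define e1 e2 where "e1 = exp (\<beta> * (xs i \<bullet> (V *v xs 1)))" and "e2 = exp (\<beta> * (xs i \<bullet> (V *v xs 2)))"
  have "e1 / (e1 + e2) = w"
    by (simp add: e1_def e2_def w_def exp_div_exp_add_exp right_diff_distrib)
  moreover have "e2 / (e1 + e2) = 1 - e1 / (e1 + e2)"
  proof -
    have "e1 + e2 > 0" by (simp add: e1_def e2_def add_pos_pos)
    then show ?thesis by (simp add: field_simps)
  qed
  ultimately have "(1 / (e1 + e2)) *\<^sub>R (e1 *\<^sub>R (V *v xs 1) + e2 *\<^sub>R (V *v xs 2))
      = w *\<^sub>R (V *v xs 1) + (1 - w) *\<^sub>R (V *v xs 2)"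
    by (simp add: scaleR_add_right)
  then show ?thesis
    by (simp add: two_particle_field_def e1_def e2_def)
qed

lemma two_particle_inner_derivative_eq:
  fixes \<beta> :: real and V :: "real^'n^'n" and xs :: "nat \<Rightarrow> real^'n"
  assumes sym: "transpose V = V"
  defines "a \<equiv> xs 1 \<bullet> (V *v xs 1)" and "b \<equiv> xs 1 \<bullet> (V *v xs 2)"
    and "c \<equiv> xs 2 \<bullet> (V *v xs 2)" and "r \<equiv> xs 1 \<bullet> xs 2"
  defines "p \<equiv> logistic (\<beta> * (a - b))" and "q \<equiv> logistic (\<beta> * (c - b))"
  shows "two_particle_field \<beta> V xs 1 \<bullet> xs 2 + xs 1 \<bullet> two_particle_field \<beta> V xs 2
    = p * (b - a * r) + (1 - p) * (c - b * r) + (1 - q) * (a - b * r) + q * (b - c * r)"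
proof -
  have b': "xs 2 \<bullet> (V *v xs 1) = b"
    using symmetric_matrix_inner_commute[OF sym] by (simp add: b_def)
  have F1: "two_particle_field \<beta> V xs 1 = tproj (xs 1) (p *\<^sub>R (V *v xs 1) + (1 - p) *\<^sub>R (V *v xs 2))"
    by (simp only: two_particle_field_eq_tproj p_def a_def b_def)
  have "- (\<beta> * (c - b)) = \<beta> * (b - c)" by (simp add: algebra_simps)
  then have "logistic (\<beta> * (b - c)) = 1 - q"
    using logistic_neg[of "\<beta> * (c - b)"] by (simp add: q_def)
  then have F2: "two_particle_field \<beta> V xs 2 = tproj (xs 2) ((1 - q) *\<^sub>R (V *v xs 1) + q *\<^sub>R (V *v xs 2))"
    unfolding two_particle_field_eq_tproj b' c_def[symmetric] by simp
  have swapped: "(V *v xs 1) \<bullet> xs 2 = b" "(V *v xs 2) \<bullet> xs 2 = c" "xs 2 \<bullet> xs 1 = r"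
    using b' by (simp_all add: c_def r_def inner_commute)
  have "two_particle_field \<beta> V xs 1 \<bullet> xs 2 = p * (b - a * r) + (1 - p) * (c - b * r)"
    unfolding F1 inner_tproj_left inner_add_left inner_add_right inner_scaleR_left inner_scaleR_right
      swapped a_def[symmetric] b_def[symmetric] r_def[symmetric]
    by (simp add: algebra_simps)
  moreover have "xs 1 \<bullet> two_particle_field \<beta> V xs 2 = (1 - q) * (a - b * r) + q * (b - c * r)"
    unfolding F2 inner_tproj_right inner_add_right inner_scaleR_right
      swapped b' a_def[symmetric] b_def[symmetric] c_def[symmetric] r_def[symmetric]
    by (simp add: algebra_simps)
  ultimately show ?thesis by simp
qed

lemma two_particle_inner_derivative_neg:
  fixes \<beta> :: real and V :: "real^'n^'n" and xs :: "nat \<Rightarrow> real^'n"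
  assumes "\<beta> > 0" and sym: "transpose V = V" and negdef: "\<forall>v. v \<noteq> 0 \<longrightarrow> v \<bullet> (V *v v) < 0"
    and "norm (xs 1) = 1" "norm (xs 2) = 1" and r: "xs 1 \<bullet> xs 2 \<in> {-1<..<1}"
  shows "two_particle_field \<beta> V xs 1 \<bullet> xs 2 + xs 1 \<bullet> two_particle_field \<beta> V xs 2 < 0"
proof -
  have "xs 1 \<noteq> 0" "xs 2 \<noteq> 0" using assms(4,5) by auto
  then have a: "xs 1 \<bullet> (V *v xs 1) < 0" and c: "xs 2 \<bullet> (V *v xs 2) < 0"
    using negdef by auto
  have "xs 1 \<noteq> xs 2"
    using r assms(4) by (auto simp: dot_square_norm)
  then have "(xs 1 - xs 2) \<bullet> (V *v (xs 1 - xs 2)) < 0"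
    using negdef by simp
  then have attracting: "xs 1 \<bullet> (V *v xs 1) + xs 2 \<bullet> (V *v xs 2) < 2 * (xs 1 \<bullet> (V *v xs 2))"
    using symmetric_matrix_inner_commute[OF sym, of "xs 2" "xs 1"]
    by (simp add: matrix_vector_mult_diff_distrib inner_diff_left inner_diff_right)
  show ?thesis
    unfolding two_particle_inner_derivative_eq[OF sym]
    using r by (intro softmax_derivative_neg[OF a c attracting negdef_cauchy_schwarz[OF sym negdef]]
        \<open>\<beta> > 0\<close>) auto
qed

lemma has_real_derivative_inner:
  fixes f g :: "real \<Rightarrow> 'a::real_inner"
  assumes "(f has_vector_derivative f') (at t within S)" and "(g has_vector_derivative g') (at t within S)"
  shows "((\<lambda>s. f s \<bullet> g s) has_real_derivative f' \<bullet> g t + f t \<bullet> g') (at t within S)"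
proof -
  have "((\<lambda>s. f s \<bullet> g s) has_derivative (\<lambda>h. f t \<bullet> (h *\<^sub>R g') + (h *\<^sub>R f') \<bullet> g t)) (at t within S)"
    using assms unfolding has_vector_derivative_def by (rule has_derivative_inner)
  moreover have "(\<lambda>h. f t \<bullet> (h *\<^sub>R g') + (h *\<^sub>R f') \<bullet> g t) = (*) (f' \<bullet> g t + f t \<bullet> g')"
    by (rule ext) (simp add: algebra_simps)
  ultimately show ?thesis
    unfolding has_field_derivative_def by simp
qed
lemma has_real_derivative_neg_imp_decreasing_on_interval:
  fixes f :: "real \<Rightarrow> real"
  assumes "is_interval J"
    and deriv: "\<And>u. u \<in> J \<Longrightarrow> (f has_real_derivative f' u) (at u within J)"
    and neg: "\<And>u. u \<in> J \<Longrightarrow> f' u < 0"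
    and "s \<in> J" "t \<in> J" "s < t"
  shows "f t < f s"
proof -
  have sub: "{s..t} \<subseteq> J"
    using assms(1,4,5) unfolding is_interval_1 by (meson atLeastAtMost_iff subsetI)
  have "(f has_derivative (*) (f' u)) (at u within {s..t})" if "s \<le> u" "u \<le> t" for u
  proof -
    have "u \<in> J" using sub that by auto
    then show ?thesis
      using has_field_derivative_subset[OF deriv sub] unfolding has_field_derivative_def by blast
  qed
  from mvt_simple[OF \<open>s < t\<close> this]
  obtain \<xi> where "\<xi> \<in> {s<..<t}" "f t - f s = f' \<xi> * (t - s)"
    by blast
  moreover have "f' \<xi> < 0"
    using sub \<open>\<xi> \<in> {s<..<t}\<close> by (intro neg) auto
  then have "f' \<xi> * (t - s) < 0"
    using \<open>s < t\<close> by (intro mult_neg_pos) auto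
  ultimately show ?thesis by simp
qed

theorem lemma6p3:
  fixes \<beta> :: real and V :: "real^'n^'n" and x :: "nat \<Rightarrow> real \<Rightarrow> real^'n"
    and I :: "real set"
  assumes beta_pos: "\<beta> > 0"
    and V_sym: "transpose V = V"
    and V_negdef: "\<forall>v. v \<noteq> 0 \<longrightarrow> v \<bullet> (V *v v) < 0"
    and I_interval: "is_interval I"
    and on_sphere: "\<forall>i\<in>{1,2}. \<forall>t\<in>I. norm (x i t) = 1"
    and ode: "\<forall>i\<in>{1,2}. \<forall>t\<in>I.
               (x i has_vector_derivative two_particle_field \<beta> V (\<lambda>j. x j t) i) (at t within I)"
  shows "(\<forall>t\<in>I. x 1 t \<bullet> x 2 t \<in> {-1<..<1} \<longrightarrow>
            (\<exists>D<0. ((\<lambda>s. x 1 s \<bullet> x 2 s) has_real_derivative D) (at t within I)))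
       \<and> (\<forall>J. J \<subseteq> I \<and> is_interval J \<and> (\<forall>t\<in>J. x 1 t \<bullet> x 2 t \<in> {-1<..<1}) \<longrightarrow>
            (\<forall>s\<in>J. \<forall>t\<in>J. s < t \<longrightarrow> x 1 t \<bullet> x 2 t < x 1 s \<bullet> x 2 s))"
proof -
  define \<rho> where "\<rho> s = x 1 s \<bullet> x 2 s" for s
  define \<rho>' where "\<rho>' t = two_particle_field \<beta> V (\<lambda>j. x j t) 1 \<bullet> x 2 t
    + x 1 t \<bullet> two_particle_field \<beta> V (\<lambda>j. x j t) 2" for t
  have deriv: "(\<rho> has_real_derivative \<rho>' t) (at t within I)" if "t \<in> I" for t
    unfolding \<rho>_def \<rho>'_def using ode that by (intro has_real_derivative_inner) auto
  have neg: "\<rho>' t < 0" if "t \<in> I" "\<rho> t \<in> {-1<..<1}" for t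
    unfolding \<rho>'_def using on_sphere that
    by (intro two_particle_inner_derivative_neg[OF beta_pos V_sym V_negdef]) (auto simp: \<rho>_def)
  show ?thesis
    unfolding \<rho>_def[symmetric]
  proof (intro conjI ballI allI impI)
    show "\<exists>D<0. (\<rho> has_real_derivative D) (at t within I)" if "t \<in> I" "\<rho> t \<in> {-1<..<1}" for t
      using deriv neg that by blast
    show "\<rho> t < \<rho> s"
      if "J \<subseteq> I \<and> is_interval J \<and> (\<forall>t\<in>J. \<rho> t \<in> {-1<..<1})" "s \<in> J" "t \<in> J" "s < t" for J s t
    proof (rule has_real_derivative_neg_imp_decreasing_on_interval[of J \<rho> \<rho>'])
      show "(\<rho> has_real_derivative \<rho>' u) (at u within J)" if "u \<in> J" for u
        using has_field_derivative_subset[OF deriv] that \<open>J \<subseteq> I \<and> _\<close> by blast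
    qed (use that neg in auto)
  qed
qed

end
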